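(* For each $n$, consider the distributed system (under the RJSQ policy) and its synchronized service pool (SSP), as described in the context, both initially empty. Then the process $\Gamma^\star_n(t)=\sum_{k=1}^sW_{n,k}(t)-W^\star_n(t)$, $t\ge0$, has continuous, piecewise linear sample paths, and $\Gamma^\star_n(t)\ge0$ for all $t\ge0$.
   Context: Distributed system $n$: $s\ge2$ stations with single work-conserving FCFS servers, unlimited waiting room, service rates $0<\mu_1\le\cdots\le\mu_s$, $\mu=\sum_k\mu_k$. Customer $j$ appears at time $a_n(j)=\sum_{i\le j}z(i)/\lambda_n$ ($z(i)$ i.i.d. nonnegative with mean 1), has traveling delay vector $\sqrt n\boldsymbol\gamma(j)$ ($\boldsymbol\gamma(j)$ i.i.d. random vectors in $\mathbb R_+^s$ taking finitely many values $\boldsymbol d_1,\ldots,\boldsymbol d_b$), and is routed by the randomized join-the-shortest-queue (RJSQ) policy to a destination $\xi_n(j)\in\{1,\ldots,s\}$ (each customer is sent to station $k$ with probability depending on the ranking of the weighted queue lengths $Q_{n,\ell}/\mu_\ell$ at its appearance), arriving at station $\xi_n(j)$ at time $a_n(j)+\sqrt n\gamma_{\xi_n(j)}(j)$. The $i$th customer served at station $k$ has service requirement $w_k(i)$ (i.i.d. nonnegative, mean 1) and service time $w_k(i)/\mu_k$. $W_{n,k}(t)$ is the stationed workload at station $k$: the total unfinished service requirement (remaining service time multiplied by $\mu_k$) of customers present at station $k$ at time $t$. SSP $n$: a single station with one work-conserving FCFS server of rate $\mu$ and unlimited waiting room. For each customer $j$ of distributed system $n$ there is a counterpart that is of class $k$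 if $\xi_n(j)=k$, arrives at the SSP station at the same time $a_n(j)+\sqrt n\gamma_{\xi_n(j)}(j)$, and has the same service requirement (the $i$th class-$k$ customer requires $w_k(i)$, with service time $w_k(i)/\mu$). $W^\star_n(t)$ is the total unfinished service requirement of customers present at the SSP station at time $t$. *)

theory Defs
  imports "HOL-Analysis.Analysis"
begin

text \<open>Workload (in units of service requirement) at time t of a single-station,
single-server, work-conserving queue with server rate c, initially empty, fed by the
customers j \<ge> 1 with sel j, customer j arriving at time arr j with service
requirement v j.  This is the standard explicit (Reich / one-sided reflection) formula
  W(t) = sup over u in [0,t] of ( work arriving in [u,t] - c (t - u) ),
which describes the total unfinished service requirement present at time t
(right-continuous, customers arriving exactly at t included).\<close>

definition queue_workload ::
  "(nat \<Rightarrow> real) \<Rightarrow> (nat \<Rightarrow> real) \<Rightarrow> (nat \<Rightarrow> bool) \<Rightarrow> real \<Rightarrow> real \<Rightarrow> real" where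
  "queue_workload arr v sel c t =
     (SUP u\<in>{0..t}. (\<Sum>j\<in>{j. 1 \<le> j \<and> sel j \<and> u \<le> arr j \<and> arr j \<le> t}. v j) - c * (t - u))"

text \<open>Piecewise linear on [0,\<infinity>): on every [0,T] there is a finite partition
such that f is affine on each cell.\<close>

definition piecewise_linear_nonneg :: "(real \<Rightarrow> real) \<Rightarrow> bool" where
  "piecewise_linear_nonneg f \<longleftrightarrow>
     (\<forall>T>0. \<exists>P. finite P \<and> 0 \<in> P \<and> T \<in> P \<and> P \<subseteq> {0..T} \<and>
        (\<forall>a\<in>P. \<forall>b\<in>P. a < b \<and> {a<..<b} \<inter> P = {} \<longrightarrow>
            (\<exists>\<alpha> \<beta>. \<forall>x\<in>{a..b}. f x = \<alpha> * x + \<beta>)))"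

end

theory Submission
  imports Defs
begin

text \<open>Between two arrival epochs every workload decreases at the rate of its server until
it hits zero, so there each station workload and the pooled workload is a hinge function
\<open>max (w - c (t - a)) 0\<close>; at an arrival epoch each of them jumps by the arriving work.
The work of a customer enters exactly one station and the pool, so the jumps cancel in
\<Gamma>, which is therefore continuous and, between arrivals, a finite sum of hinge functions,
hence piecewise linear. Nonnegativity: splitting the arriving work and the pooled rate (the
sum of the station rates) by station bounds each term of the supremum defining the pooled
workload by the sum of the station workloads.\<close>

definition affine_on :: "real set \<Rightarrow> (real \<Rightarrow> real) \<Rightarrow> bool" where
  "affine_on I f \<longleftrightarrow> (\<exists>\<alpha> \<beta>. \<forall>x\<in>I. f x = \<alpha> * x + \<beta>)"

lemma affine_on_cong: "(\<And>x. x \<in> I \<Longrightarrow> f x = g x) \<Longrightarrow> affine_on I g \<Longrightarrow> affine_on I f"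
  unfolding affine_on_def by simp

lemma affine_on_diff: "affine_on I f \<Longrightarrow> affine_on I g \<Longrightarrow> affine_on I (\<lambda>x. f x - g x)"
  unfolding affine_on_def by (metis left_diff_distrib add_diff_add)

lemma affine_on_sum:
  assumes "\<And>k. k \<in> K \<Longrightarrow> affine_on I (f k)"
  shows "affine_on I (\<lambda>x. \<Sum>k\<in>K. f k x)"
proof (cases "finite K")
  case True
  then show ?thesis using assms
  proof (induction K rule: finite_induct)
    case empty
    show ?case unfolding affine_on_def by (intro exI[of _ 0]) simp
  next
    case (insert k K)
    then obtain \<alpha> \<beta> \<alpha>' \<beta>' where "\<forall>x\<in>I. f k x = \<alpha> * x + \<beta>" "\<forall>x\<in>I. (\<Sum>k\<in>K. f k x) = \<alpha>' * x + \<beta>'"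
      unfolding affine_on_def by (meson insertI1 insertI2)
    then have "\<forall>x\<in>I. (\<Sum>k\<in>insert k K. f k x) = (\<alpha> + \<alpha>') * x + (\<beta> + \<beta>')"
      using insert.hyps by (simp add: algebra_simps)
    then show ?case unfolding affine_on_def by blast
  qed
next
  case False
  then show ?thesis unfolding affine_on_def by (intro exI[of _ 0]) simp
qed

lemma affine_on_hinge:
  fixes c w a :: real
  assumes "0 \<le> c" and "a + w / c \<notin> {p<..<q}"
  shows "affine_on {p..q} (\<lambda>x. max (w - c * (x - a)) 0)"
proof (cases "c = 0")
  case True
  \<comment> \<open>then the kink \<open>a + w / c\<close> is the junk value \<open>a\<close>, but the function is constant\<close>
  then show ?thesis unfolding affine_on_def by (intro exI[of _ 0] exI[of _ "max w 0"]) auto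
next
  case False
  with \<open>0 \<le> c\<close> have below: "c * (x - a) \<le> w \<longleftrightarrow> x \<le> a + w / c"
    and above: "w \<le> c * (x - a) \<longleftrightarrow> a + w / c \<le> x" for x
    by (simp_all add: field_simps)
  show ?thesis
  proof (cases "q \<le> a + w / c")
    case True
    then have "max (w - c * (x - a)) 0 = (- c) * x + (w + c * a)" if "x \<in> {p..q}" for x
      using that below[of x] by (simp add: algebra_simps)
    then show ?thesis unfolding affine_on_def by blast
  next
    case False
    then have "a + w / c \<le> p" using assms(2) by auto
    then have "max (w - c * (x - a)) 0 = 0 * x + 0" if "x \<in> {p..q}" for x
      using that above[of x] by simp
    then show ?thesis unfolding affine_on_def by blast
  qed
qed

lemma piecewise_linear_nonneg_iff:
  "piecewise_linear_nonneg f \<longleftrightarrow>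
     (\<forall>T>0. \<exists>P. finite P \<and> 0 \<in> P \<and> T \<in> P \<and> P \<subseteq> {0..T} \<and>
        (\<forall>a\<in>P. \<forall>b\<in>P. a < b \<and> {a<..<b} \<inter> P = {} \<longrightarrow> affine_on {a..b} f))"
  unfolding piecewise_linear_nonneg_def affine_on_def ..

lemma consecutive_points_enclosing:
  fixes P :: "real set"
  assumes "finite P" "p \<in> P" "q \<in> P" "p \<le> x" "x \<le> q" "p < q"
  obtains a b where "a \<in> P" "b \<in> P" "a < b" "a \<le> x" "x \<le> b" "{a<..<b} \<inter> P = {}"
proof -
  define A where "A = {y\<in>P. y \<le> x \<and> y < q}"
  define a where "a = Max A"
  define B where "B = {y\<in>P. a < y}"
  define b where "b = Min B"
  have A: "finite A" "p \<in> A" using assms unfolding A_def by auto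
  then have "a \<in> A" unfolding a_def by (intro Max_in) auto
  then have a: "a \<in> P" "a \<le> x" "a < q" unfolding A_def by auto
  have a_max: "\<And>y. y \<in> P \<Longrightarrow> y \<le> x \<Longrightarrow> y < q \<Longrightarrow> y \<le> a"
    using A unfolding a_def A_def by (intro Max_ge) auto
  have B: "finite B" "q \<in> B" using assms a unfolding B_def by auto
  then have "b \<in> B" unfolding b_def by (intro Min_in) auto
  then have b: "b \<in> P" "a < b" unfolding B_def by auto
  have b_min: "\<And>y. y \<in> P \<Longrightarrow> a < y \<Longrightarrow> b \<le> y"
    using B unfolding b_def B_def by (intro Min_le) auto
  have "x \<le> b"
    using a_max[of b] b b_min[of q] assms by fastforce
  moreover have "{a<..<b} \<inter> P = {}"
    using b_min by fastforce
  ultimately show thesis using that a b by blast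
qed

lemma continuous_on_if_affine_on: "affine_on I f \<Longrightarrow> continuous_on I f"
proof -
  assume "affine_on I f"
  then obtain \<alpha> \<beta> where "\<forall>x\<in>I. f x = \<alpha> * x + \<beta>" unfolding affine_on_def by blast
  moreover have "continuous_on I (\<lambda>x. \<alpha> * x + \<beta>)" by (intro continuous_intros)
  ultimately show "continuous_on I f" by (simp add: continuous_on_eq)
qed

lemma continuous_on_if_piecewise_linear_nonneg:
  assumes "piecewise_linear_nonneg f"
  shows "continuous_on {0..} f"
proof -
  have cont_T: "continuous_on {0..T} f" if "0 < T" for T
  proof -
    obtain P where P: "finite P" "0 \<in> P" "T \<in> P" "P \<subseteq> {0..T}"
      and cells: "\<And>a b. a \<in> P \<Longrightarrow> b \<in> P \<Longrightarrow> a < b \<Longrightarrow> {a<..<b} \<inter> P = {} \<Longrightarrow> affine_on {a..b} f"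
      using assms \<open>0 < T\<close> unfolding piecewise_linear_nonneg_iff by meson
    define C where "C = {(a, b). a \<in> P \<and> b \<in> P \<and> a < b \<and> {a<..<b} \<inter> P = {}}"
    have "finite C"
      using P(1) by (intro finite_subset[of C "P \<times> P"]) (auto simp: C_def)
    then have "continuous_on (\<Union>(a, b)\<in>C. {a..b}) f"
      by (intro continuous_on_closed_Union) (auto simp: C_def intro: continuous_on_if_affine_on cells)
    moreover have "{0..T} \<subseteq> (\<Union>(a, b)\<in>C. {a..b})"
    proof
      fix x assume "x \<in> {0..T}"
      with P \<open>0 < T\<close> obtain a b where "a \<in> P" "b \<in> P" "a < b" "a \<le> x" "x \<le> b" "{a<..<b} \<inter> P = {}"
        by (elim consecutive_points_enclosing) auto
      then show "x \<in> (\<Union>(a, b)\<in>C. {a..b})" unfolding C_def by auto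
    qed
    ultimately show ?thesis by (rule continuous_on_subset)
  qed
  show ?thesis
    unfolding continuous_on_def
  proof
    fix t :: real assume "t \<in> {0..}"
    then have "(f \<longlongrightarrow> f t) (at t within {0..t + 1})"
      using cont_T[of "t + 1"] unfolding continuous_on_def by auto
    moreover have "at t within {0..t + 1} = at t within {0..}"
      by (rule at_within_nhd[of _ "{..<t + 1}"]) auto
    ultimately show "(f \<longlongrightarrow> f t) (at t within {0..})" by simp
  qed
qed

text \<open>\<open>E\<close> is a set of event times and \<open>B a\<close> the breakpoints of a description of \<open>f\<close> that is
valid from time \<open>a\<close> up to the next event.\<close>

lemma piecewise_linear_nonneg_from_events:
  fixes f :: "real \<Rightarrow> real" and E :: "real set" and B :: "real \<Rightarrow> real set"
  assumes finite_E: "\<And>T. finite (E \<inter> {..T})"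
    and finite_B: "\<And>a. finite (B a)"
    and affine: "\<And>a x y. 0 \<le> a \<Longrightarrow> a \<le> x \<Longrightarrow> x < y \<Longrightarrow> E \<inter> {a<..<y} = {} \<Longrightarrow>
                    B a \<inter> {x<..<y} = {} \<Longrightarrow> affine_on {x..y} f"
  shows "piecewise_linear_nonneg f"
  unfolding piecewise_linear_nonneg_iff
proof (intro allI impI)
  fix T :: real assume "0 < T"
  define P0 where "P0 = {0, T} \<union> E \<inter> {0..T}"
  define P where "P = P0 \<union> (\<Union>a\<in>P0. B a) \<inter> {0..T}"
  have "finite (E \<inter> {0..T})"
    by (rule finite_subset[OF _ finite_E[of T]]) auto
  then have "finite P0" unfolding P0_def by simp
  then have P: "finite P" "0 \<in> P" "T \<in> P" "P \<subseteq> {0..T}"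
    using \<open>0 < T\<close> finite_B unfolding P_def P0_def by auto
  have cells: "affine_on {x..y} f" if "x \<in> P" "y \<in> P" "x < y" "{x<..<y} \<inter> P = {}" for x y
  proof -
    define A where "A = {p\<in>P0. p \<le> x}"
    define a where "a = Max A"
    have "0 \<in> P0" unfolding P0_def by simp
    then have A: "finite A" "0 \<in> A"
      using \<open>finite P0\<close> that(1) P(4) unfolding A_def by auto
    then have "a \<in> A" unfolding a_def by (intro Max_in) auto
    have "P0 \<subseteq> {0..T}" using P(4) unfolding P_def by blast
    with \<open>a \<in> A\<close> have a: "a \<in> P0" "0 \<le> a" "a \<le> x"
      unfolding A_def by auto
    have a_max: "p \<le> a" if "p \<in> P0" "p \<le> x" for p
      using A that unfolding a_def A_def by (intro Max_ge) auto
    have "e \<notin> E" if "a < e" "e < y" for e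
    proof
      assume "e \<in> E"
      then have "e \<in> P0" using that a(2) P(4) \<open>y \<in> P\<close> unfolding P0_def by auto
      then have "e \<notin> {x<..<y}" using \<open>{x<..<y} \<inter> P = {}\<close> unfolding P_def by blast
      then show False using a_max[OF \<open>e \<in> P0\<close>] that by auto
    qed
    then have "E \<inter> {a<..<y} = {}" by auto
    moreover have "B a \<inter> {x<..<y} = {}"
    proof -
      have "B a \<inter> {x<..<y} \<subseteq> {x<..<y} \<inter> P"
        using a(1) P(4) \<open>x \<in> P\<close> \<open>y \<in> P\<close> unfolding P_def by fastforce
      then show ?thesis using \<open>{x<..<y} \<inter> P = {}\<close> by blast
    qed
    ultimately show ?thesis using affine a \<open>x < y\<close> by blast
  qed
  show "\<exists>P. finite P \<and> 0 \<in> P \<and> T \<in> P \<and> P \<subseteq> {0..T} \<and>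
      (\<forall>a\<in>P. \<forall>b\<in>P. a < b \<and> {a<..<b} \<inter> P = {} \<longrightarrow> affine_on {a..b} f)"
    by (intro exI[of _ P] conjI P ballI impI cells) auto
qed

definition work_in :: "(nat \<Rightarrow> real) \<Rightarrow> (nat \<Rightarrow> real) \<Rightarrow> (nat \<Rightarrow> bool) \<Rightarrow> real set \<Rightarrow> real" where
  "work_in arr v sel I = (\<Sum>j\<in>{j. 1 \<le> j \<and> sel j \<and> arr j \<in> I}. v j)"

lemma queue_workload_eq_SUP_work_in:
  "queue_workload arr v sel c t = (SUP u\<in>{0..t}. work_in arr v sel {u..t} - c * (t - u))"
  unfolding queue_workload_def work_in_def by simp

lemma work_in_split_classes:
  assumes "finite {j. 1 \<le> j \<and> arr j \<in> I}" and "finite K" and "\<forall>j\<ge>1. xi j \<in> K"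
  shows "(\<Sum>k\<in>K. work_in arr v (\<lambda>j. xi j = k) I) = work_in arr v (\<lambda>j. True) I"
proof -
  have "(\<Sum>k\<in>K. work_in arr v (\<lambda>j. xi j = k) I) =
      (\<Sum>k\<in>K. \<Sum>j\<in>{j\<in>{j. 1 \<le> j \<and> arr j \<in> I}. xi j = k}. v j)"
    unfolding work_in_def by (intro sum.cong) auto
  also have "\<dots> = work_in arr v (\<lambda>j. True) I"
    unfolding work_in_def using sum.group[OF assms(1,2), of xi v] assms(3) by auto
  finally show ?thesis .
qed

locale arrival_stream =
  fixes arr v :: "nat \<Rightarrow> real"
  assumes finite_arrivals: "\<And>t. finite {j. 1 \<le> j \<and> arr j \<le> t}"
    and work_nonneg: "\<And>j. 1 \<le> j \<Longrightarrow> 0 \<le> v j"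
begin

lemma finite_arrivals_in: "I \<subseteq> {..t} \<Longrightarrow> finite {j. 1 \<le> j \<and> sel j \<and> arr j \<in> I}"
  by (rule finite_subset[OF _ finite_arrivals[of t]]) auto

lemma work_in_mono: "I \<subseteq> J \<Longrightarrow> J \<subseteq> {..t} \<Longrightarrow> work_in arr v sel I \<le> work_in arr v sel J"
  unfolding work_in_def by (rule sum_mono2[OF finite_arrivals_in]) (auto simp: work_nonneg)

lemma work_in_Un:
  assumes "I \<inter> J = {}" and "I \<union> J \<subseteq> {..t}"
  shows "work_in arr v sel (I \<union> J) = work_in arr v sel I + work_in arr v sel J"
proof -
  have "{j. 1 \<le> j \<and> sel j \<and> arr j \<in> I \<union> J} =
      {j. 1 \<le> j \<and> sel j \<and> arr j \<in> I} \<union> {j. 1 \<le> j \<and> sel j \<and> arr j \<in> J}"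
    by auto
  moreover have "finite {j. 1 \<le> j \<and> sel j \<and> arr j \<in> I}" "finite {j. 1 \<le> j \<and> sel j \<and> arr j \<in> J}"
    using assms(2) finite_arrivals_in[of I t sel] finite_arrivals_in[of J t sel] by auto
  ultimately show ?thesis
    unfolding work_in_def using assms(1) by (simp add: sum.union_disjoint disjoint_iff)
qed

lemma bdd_above_net_work:
  "bdd_above ((\<lambda>u. work_in arr v sel {u..t} - c * (t - u)) ` {0..t})"
proof (rule bdd_aboveI2)
  fix u assume "u \<in> {0..t}"
  then have "- c * (t - u) \<le> \<bar>c\<bar> * (t - u)"
    by (intro mult_right_mono) auto
  also have "\<dots> \<le> \<bar>c\<bar> * t"
    using \<open>u \<in> {0..t}\<close> by (intro mult_left_mono) auto
  finally have "- c * (t - u) \<le> \<bar>c\<bar> * t" .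
  moreover have "work_in arr v sel {u..t} \<le> work_in arr v sel {..t}"
    by (rule work_in_mono) auto
  ultimately show "work_in arr v sel {u..t} - c * (t - u) \<le> work_in arr v sel {..t} + \<bar>c\<bar> * t"
    by linarith
qed

lemma queue_workload_ge:
  "0 \<le> u \<Longrightarrow> u \<le> t \<Longrightarrow> work_in arr v sel {u..t} - c * (t - u) \<le> queue_workload arr v sel c t"
  unfolding queue_workload_eq_SUP_work_in by (rule cSUP_upper[OF _ bdd_above_net_work]) auto

lemma queue_workload_le:
  "0 \<le> t \<Longrightarrow> (\<And>u. 0 \<le> u \<Longrightarrow> u \<le> t \<Longrightarrow> work_in arr v sel {u..t} - c * (t - u) \<le> M) \<Longrightarrow>
    queue_workload arr v sel c t \<le> M"
  unfolding queue_workload_eq_SUP_work_in by (rule cSUP_least) auto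

lemma queue_workload_step:
  assumes "0 \<le> c" "0 \<le> a" "a \<le> t"
    and quiet: "\<And>j. 1 \<le> j \<Longrightarrow> sel j \<Longrightarrow> arr j \<notin> {a<..<t}"
  shows "queue_workload arr v sel c t =
    max (queue_workload arr v sel c a - c * (t - a)) 0 + work_in arr v sel {a<..t}"
proof -
  let ?W = "queue_workload arr v sel c" and ?A = "work_in arr v sel"
  have split: "?A {u..t} = ?A {u..a} + ?A {a<..t}" if "u \<le> a" for u
  proof -
    have "{u..t} = {u..a} \<union> {a<..t}" using that \<open>a \<le> t\<close> by auto
    moreover have "?A ({u..a} \<union> {a<..t}) = ?A {u..a} + ?A {a<..t}"
      using \<open>a \<le> t\<close> by (intro work_in_Un[of _ _ t]) auto
    ultimately show ?thesis by simp
  qed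
  have "{j. 1 \<le> j \<and> sel j \<and> arr j \<in> {a<..<t}} = {}"
    using quiet by blast
  then have "?A {a<..<t} = 0"
    unfolding work_in_def by (simp only: sum.empty)
  have "?A {a<..t} \<le> ?A ({a<..<t} \<union> {t..t})"
    by (rule work_in_mono[of _ _ t]) auto
  also have "\<dots> = ?A {t..t}"
    using work_in_Un[of "{a<..<t}" "{t..t}" t sel] \<open>?A {a<..<t} = 0\<close> by fastforce
  also have "\<dots> \<le> ?W t"
    using queue_workload_ge[of t t sel c] assms by simp
  finally have arrivals_le: "?A {a<..t} \<le> ?W t" .
  have "?W t \<le> max (?W a - c * (t - a)) 0 + ?A {a<..t}"
  proof (rule queue_workload_le)
    fix u assume u: "0 \<le> u" "u \<le> t"
    show "?A {u..t} - c * (t - u) \<le> max (?W a - c * (t - a)) 0 + ?A {a<..t}"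
    proof (cases "u \<le> a")
      case True
      then show ?thesis
        using queue_workload_ge[of u a sel c] u split[of u] by (simp add: algebra_simps)
    next
      case False
      then have "?A {u..t} \<le> ?A {a<..t}" by (intro work_in_mono) auto
      moreover have "0 \<le> c * (t - u)" using \<open>0 \<le> c\<close> u by simp
      ultimately show ?thesis by linarith
    qed
  qed (use assms in simp)
  moreover have "?W a \<le> ?W t + c * (t - a) - ?A {a<..t}"
  proof (rule queue_workload_le)
    fix u assume u: "0 \<le> u" "u \<le> a"
    show "?A {u..a} - c * (a - u) \<le> ?W t + c * (t - a) - ?A {a<..t}"
      using queue_workload_ge[of u t sel c] u split[of u] assms by (simp add: algebra_simps)
  qed (use assms in simp)
  ultimately show ?thesis using arrivals_le by linarith
qed

lemma queue_workload_pooled_le: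
  assumes "0 \<le> t" and "finite K" and "\<forall>j\<ge>1. xi j \<in> K"
  shows "queue_workload arr v (\<lambda>j. True) (\<Sum>k\<in>K. c k) t \<le>
    (\<Sum>k\<in>K. queue_workload arr v (\<lambda>j. xi j = k) (c k) t)"
proof (rule queue_workload_le[OF \<open>0 \<le> t\<close>])
  fix u assume u: "0 \<le> u" "u \<le> t"
  have "work_in arr v (\<lambda>j. True) {u..t} - (\<Sum>k\<in>K. c k) * (t - u) =
      (\<Sum>k\<in>K. work_in arr v (\<lambda>j. xi j = k) {u..t} - c k * (t - u))"
    using work_in_split_classes[OF _ assms(2,3), of arr "{u..t}" v]
      finite_arrivals_in[of "{u..t}" t "\<lambda>j. True"]
    by (simp add: sum_subtractf sum_distrib_right)
  also have "\<dots> \<le> (\<Sum>k\<in>K. queue_workload arr v (\<lambda>j. xi j = k) (c k) t)"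
    by (intro sum_mono queue_workload_ge u)
  finally show "work_in arr v (\<lambda>j. True) {u..t} - (\<Sum>k\<in>K. c k) * (t - u) \<le> \<dots>" .
qed

end

definition workload_gap ::
  "(nat \<Rightarrow> real) \<Rightarrow> (nat \<Rightarrow> real) \<Rightarrow> (nat \<Rightarrow> nat) \<Rightarrow> (nat \<Rightarrow> real) \<Rightarrow> nat set \<Rightarrow> real \<Rightarrow> real" where
  "workload_gap arr v xi mu K t =
     (\<Sum>k\<in>K. queue_workload arr v (\<lambda>j. xi j = k) (mu k) t)
     - queue_workload arr v (\<lambda>j. True) (\<Sum>k\<in>K. mu k) t"

locale routed_arrival_stream = arrival_stream arr v
  for arr v :: "nat \<Rightarrow> real" +
  fixes xi :: "nat \<Rightarrow> nat" and mu :: "nat \<Rightarrow> real" and K :: "nat set"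
  assumes finite_stations: "finite K"
    and rates_nonneg: "\<And>k. k \<in> K \<Longrightarrow> 0 \<le> mu k"
    and routing: "\<forall>j\<ge>1. xi j \<in> K"
begin

abbreviation station_workload :: "nat \<Rightarrow> real \<Rightarrow> real" where
  "station_workload k \<equiv> queue_workload arr v (\<lambda>j. xi j = k) (mu k)"

abbreviation total_rate :: real where
  "total_rate \<equiv> \<Sum>k\<in>K. mu k"

abbreviation pooled_workload :: "real \<Rightarrow> real" where
  "pooled_workload \<equiv> queue_workload arr v (\<lambda>j. True) total_rate"

lemma total_rate_nonneg: "0 \<le> total_rate"
  using rates_nonneg by (simp add: sum_nonneg)

lemma workload_gap_nonneg: "0 \<le> t \<Longrightarrow> 0 \<le> workload_gap arr v xi mu K t"
  unfolding workload_gap_def using queue_workload_pooled_le[OF _ finite_stations routing] by simp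

lemma workload_gap_between_arrivals:
  assumes "0 \<le> a" "a \<le> t" and quiet: "arr ` {1..} \<inter> {a<..<t} = {}"
  shows "workload_gap arr v xi mu K t =
    (\<Sum>k\<in>K. max (station_workload k a - mu k * (t - a)) 0)
    - max (pooled_workload a - total_rate * (t - a)) 0"
proof -
  have no_arrival: "arr j \<notin> {a<..<t}" if "1 \<le> j" for j
    using quiet that by auto
  have "station_workload k t = max (station_workload k a - mu k * (t - a)) 0
      + work_in arr v (\<lambda>j. xi j = k) {a<..t}" if "k \<in> K" for k
    using rates_nonneg[OF that] assms(1,2) no_arrival by (intro queue_workload_step) auto
  moreover have "pooled_workload t = max (pooled_workload a - total_rate * (t - a)) 0
      + work_in arr v (\<lambda>j. True) {a<..t}"
    using total_rate_nonneg assms(1,2) no_arrival by (intro queue_workload_step) auto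
  moreover have "(\<Sum>k\<in>K. work_in arr v (\<lambda>j. xi j = k) {a<..t}) = work_in arr v (\<lambda>j. True) {a<..t}"
    using finite_arrivals_in[of "{a<..t}" t "\<lambda>j. True"]
    by (intro work_in_split_classes finite_stations routing) (simp add: subset_eq)
  ultimately show ?thesis
    unfolding workload_gap_def by (simp add: sum.distrib)
qed

lemma workload_gap_piecewise_linear: "piecewise_linear_nonneg (workload_gap arr v xi mu K)"
proof (rule piecewise_linear_nonneg_from_events)
  \<comment> \<open>the times at which the workloads, left alone from time \<open>a\<close> on, would run empty\<close>
  let ?E = "arr ` {1..}"
  and ?B = "\<lambda>a. insert (a + pooled_workload a / total_rate) ((\<lambda>k. a + station_workload k a / mu k) ` K)"
  show "finite (?E \<inter> {..T})" for T
  proof -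
    have "?E \<inter> {..T} = arr ` {j. 1 \<le> j \<and> arr j \<le> T}" by auto
    then show ?thesis using finite_arrivals by simp
  qed
  show "finite (?B a)" for a
    using finite_stations by simp
  fix a x y assume "0 \<le> a" "a \<le> x" "x < y" "?E \<inter> {a<..<y} = {}" "?B a \<inter> {x<..<y} = {}"
  show "affine_on {x..y} (workload_gap arr v xi mu K)"
  proof (rule affine_on_cong)
    fix z assume "z \<in> {x..y}"
    then show "workload_gap arr v xi mu K z =
        (\<Sum>k\<in>K. max (station_workload k a - mu k * (z - a)) 0)
        - max (pooled_workload a - total_rate * (z - a)) 0"
      using \<open>0 \<le> a\<close> \<open>a \<le> x\<close> \<open>?E \<inter> {a<..<y} = {}\<close>
      by (intro workload_gap_between_arrivals) auto
  next
    have "affine_on {x..y} (\<lambda>z. max (station_workload k a - mu k * (z - a)) 0)" if "k \<in> K" for k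
      using rates_nonneg[OF that] that \<open>?B a \<inter> {x<..<y} = {}\<close> by (intro affine_on_hinge) auto
    moreover have "affine_on {x..y} (\<lambda>z. max (pooled_workload a - total_rate * (z - a)) 0)"
      using total_rate_nonneg \<open>?B a \<inter> {x<..<y} = {}\<close> by (intro affine_on_hinge) auto
    ultimately show "affine_on {x..y} (\<lambda>z. (\<Sum>k\<in>K. max (station_workload k a - mu k * (z - a)) 0)
        - max (pooled_workload a - total_rate * (z - a)) 0)"
      by (intro affine_on_diff affine_on_sum)
  qed
qed

lemma workload_gap_continuous: "continuous_on {0..} (workload_gap arr v xi mu K)"
  by (rule continuous_on_if_piecewise_linear_nonneg[OF workload_gap_piecewise_linear])

end

lemma finite_sublevel_if_filterlim_at_top:
  fixes f :: "nat \<Rightarrow> real"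
  assumes "filterlim f at_top sequentially"
  shows "finite {j. f j \<le> t}"
proof -
  have "eventually (\<lambda>j. t < f j) cofinite"
    using assms unfolding cofinite_eq_sequentially filterlim_at_top_dense by blast
  then show ?thesis by (simp add: eventually_cofinite not_less)
qed

theorem proposition3:
  fixes s :: nat and mu :: "nat \<Rightarrow> real" and lam :: real and n :: nat
    and z :: "nat \<Rightarrow> real" and gamma :: "nat \<Rightarrow> nat \<Rightarrow> real"
    and xi :: "nat \<Rightarrow> nat" and v :: "nat \<Rightarrow> real"
    and a arr :: "nat \<Rightarrow> real" and Gamma :: "real \<Rightarrow> real"
  assumes "s \<ge> 2"
    and "\<forall>k\<in>{1..s}. 0 < mu k"
    and "\<forall>k\<in>{1..<s}. mu k \<le> mu (Suc k)"
    and "lam > 0"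
    and "\<forall>i. 0 \<le> z i"
    and "filterlim (\<lambda>j. \<Sum>i=1..j. z i) at_top sequentially"
    and "\<forall>j\<ge>1. \<forall>k\<in>{1..s}. 0 \<le> gamma j k"
    and "finite ((\<lambda>j. restrict (gamma j) {1..s}) ` {1..})"
    and "\<forall>j\<ge>1. xi j \<in> {1..s}"
    and "\<forall>j\<ge>1. 0 \<le> v j"
  defines "a \<equiv> (\<lambda>j. (\<Sum>i=1..j. z i) / lam)"
    and "arr \<equiv> (\<lambda>j. a j + sqrt (real n) * gamma j (xi j))"
    and "Gamma \<equiv> (\<lambda>t. (\<Sum>k=1..s. queue_workload arr v (\<lambda>j. xi j = k) (mu k) t)
                      - queue_workload arr v (\<lambda>j. True) (\<Sum>k=1..s. mu k) t)"
  shows "continuous_on {0..} Gamma \<and> piecewise_linear_nonneg Gamma \<and> (\<forall>t\<ge>0. 0 \<le> Gamma t)"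
proof -
  have "(\<Sum>i=1..j. z i) \<le> lam * t" if "1 \<le> j" "arr j \<le> t" for j t
  proof -
    have "(\<Sum>i=1..j. z i) \<le> lam * arr j"
      using assms(4,7,9) that(1) by (simp add: a_def arr_def field_simps)
    also have "\<dots> \<le> lam * t"
      using \<open>lam > 0\<close> that(2) by simp
    finally show ?thesis .
  qed
  then have "{j. 1 \<le> j \<and> arr j \<le> t} \<subseteq> {j. (\<Sum>i=1..j. z i) \<le> lam * t}" for t
    by blast
  then have "finite {j. 1 \<le> j \<and> arr j \<le> t}" for t
    using finite_sublevel_if_filterlim_at_top[OF assms(6)] by (rule finite_subset)
  then interpret routed_arrival_stream arr v xi mu "{1..s}"
    using assms(2,9,10) by unfold_locales (auto simp: less_imp_le)
  have "Gamma = workload_gap arr v xi mu {1..s}"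
    unfolding Gamma_def workload_gap_def ..
  then show ?thesis
    using workload_gap_continuous workload_gap_piecewise_linear workload_gap_nonneg by simp
qed

end
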